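(* Let $N\ge1$ and let $\lambda,\mu$ be complex parameters. Consider fields $x,\widetilde{x},\widehat{x},\widehat{\widetilde{x}}\in\mathbb{C}^N$ with indices taken modulo $N$. Suppose that $x,\widetilde{x},\widehat{x}$ satisfy, for all $k$, $$(E)\quad \frac{\sinh(\widetilde{x}_k-x_k+\lambda)}{\sinh(\widetilde{x}_k-x_k-\lambda)}\cdot\frac{\sinh(x_k-\widetilde{x}_{k-1}+\lambda)}{\sinh(x_k-\widetilde{x}_{k-1}-\lambda)}=\frac{\sinh(\widehat{x}_k-x_k+\mu)}{\sinh(\widehat{x}_k-x_k-\mu)}\cdot\frac{\sinh(x_k-\widehat{x}_{k-1}+\mu)}{\sinh(x_k-\widehat{x}_{k-1}-\mu)}.$$ Consider the superposition formulas $$(S1)\quad (e^{4\lambda}-e^{4\mu})\big(e^{2\widehat{x}_k}e^{2\widetilde{x}_k}+e^{2x_{k+1}}e^{2\widehat{\widetilde{x}}_k}\big)+e^{2\mu}(1-e^{4\lambda})\big(e^{2\widehat{x}_k}e^{2\widehat{\widetilde{x}}_k}+e^{2x_{k+1}}e^{2\widetilde{x}_k}\big)+e^{2\lambda}(e^{4\mu}-1)\big(e^{2\widetilde{x}_k}e^{2\widehat{\widetilde{x}}_k}+e^{2x_{k+1}}e^{2\widehat{x}_k}\big)=0,$$ $$(S2)\quad (e^{4\lambda}-e^{4\mu})\big(e^{2\widehat{x}_{k+1}}e^{2\widetilde{x}_{k+1}}+e^{2x_{k+1}}e^{2\widehat{\widetilde{x}}_k}\big)+e^{2\mu}(1-e^{4\lambda})\big(e^{2\widehat{x}_{k+1}}e^{2\widehat{\widetilde{x}}_k}+e^{2x_{k+1}}e^{2\widetilde{x}_{k+1}}\big)+e^{2\lambda}(e^{4\mu}-1)\big(e^{2\widetilde{x}_{k+1}}e^{2\widehat{\widetilde{x}}_k}+e^{2x_{k+1}}e^{2\widehat{x}_{k+1}}\big)=0.$$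 Then, by virtue of $(E)$, (S1) and (S2) are equivalent, and if $\widehat{\widetilde{x}}$ is defined by either of them, then for all $k$: $$(E_1)\quad \frac{\sinh(\widetilde{x}_k-x_k+\lambda)}{\sinh(\widetilde{x}_k-x_k-\lambda)}\cdot\frac{\sinh(x_{k+1}-\widetilde{x}_k+\lambda)}{\sinh(x_{k+1}-\widetilde{x}_k-\lambda)}=\frac{\sinh(\widehat{\widetilde{x}}_k-\widetilde{x}_k+\mu)}{\sinh(\widehat{\widetilde{x}}_k-\widetilde{x}_k-\mu)}\cdot\frac{\sinh(\widetilde{x}_k-\widehat{\widetilde{x}}_{k-1}+\mu)}{\sinh(\widetilde{x}_k-\widehat{\widetilde{x}}_{k-1}-\mu)},$$ $$(E_2)\quad \frac{\sinh(\widehat{x}_k-x_k+\mu)}{\sinh(\widehat{x}_k-x_k-\mu)}\cdot\frac{\sinh(x_{k+1}-\widehat{x}_k+\mu)}{\sinh(x_{k+1}-\widehat{x}_k-\mu)}=\frac{\sinh(\widehat{\widetilde{x}}_k-\widehat{x}_k+\lambda)}{\sinh(\widehat{\widetilde{x}}_k-\widehat{x}_k-\lambda)}\cdot\frac{\sinh(\widehat{x}_k-\widehat{\widetilde{x}}_{k-1}+\lambda)}{\sinh(\widehat{x}_k-\widehat{\widetilde{x}}_{k-1}-\lambda)},$$ $$(E_{12})\quad \frac{\sinh(\widehat{\widetilde{x}}_k-\widehat{x}_k+\lambda)}{\sinh(\widehat{\widetilde{x}}_k-\widehat{x}_k-\lambda)}\cdot\frac{\sinh(\widehat{x}_{k+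1}-\widehat{\widetilde{x}}_k+\lambda)}{\sinh(\widehat{x}_{k+1}-\widehat{\widetilde{x}}_k-\lambda)}=\frac{\sinh(\widehat{\widetilde{x}}_k-\widetilde{x}_k+\mu)}{\sinh(\widehat{\widetilde{x}}_k-\widetilde{x}_k-\mu)}\cdot\frac{\sinh(\widetilde{x}_{k+1}-\widehat{\widetilde{x}}_k+\mu)}{\sinh(\widetilde{x}_{k+1}-\widehat{\widetilde{x}}_k-\mu)}.$$
   Context: These are the corner equations for two Bäcklund transformations $F_\lambda,F_\mu$ of the periodic symmetric hyperbolic multiplicative Toda-type system $\ddot x_k=-(\dot x_k^2-1)\big(\coth(x_{k+1}-x_k)-\coth(x_k-x_{k-1})\big)$, where $F_\lambda:(x,p)\mapsto(\widetilde x,\widetilde p)$ is $e^{2p_k}=\frac{\sinh(\widetilde x_k-x_k+\lambda)}{\sinh(\widetilde x_k-x_k-\lambda)}\cdot\frac{\sinh(x_k-\widetilde x_{k-1}+\lambda)}{\sinh(x_k-\widetilde x_{k-1}-\lambda)}$, $e^{2\widetilde p_k}=\frac{\sinh(\widetilde x_k-x_k+\lambda)}{\sinh(\widetilde x_k-x_k-\lambda)}\cdot\frac{\sinh(x_{k+1}-\widetilde x_k+\lambda)}{\sinh(x_{k+1}-\widetilde x_k-\lambda)}$; hats denote the action of $F_\mu$. *)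

theory Defs
  imports Complex_Main
begin

definition nondeg :: "complex \<Rightarrow> complex \<Rightarrow> bool" where
  "nondeg a d \<longleftrightarrow> sinh (d + a) \<noteq> 0 \<and> sinh (d - a) \<noteq> 0"

end

theory Submission
  imports Defs
begin

text \<open>In the variables \<open>a = exp (2\<lambda>)\<close>, \<open>b = exp (2\<mu>)\<close>, \<open>X = exp (2x)\<close>, ... every factor
  \<open>sinh (p - q + \<lambda>) / sinh (p - q - \<lambda>)\<close> becomes the Moebius ratio \<open>(a P - Q) / (P - a Q)\<close>,
  so every equation of the theorem is polynomial. The superposition polynomial \<open>Q(X, T, H, Z)\<close>
  is affine in each variable and has the three-leg property: \<open>Q = 0\<close> says that at the vertex
  \<open>T\<close> the ratio of the \<open>\<lambda>\<close>-leg \<open>TX\<close> to the \<open>\<mu>\<close>-leg \<open>TZ\<close> depends only on the opposite vertex \<open>H\<close>.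
  Two quads sharing a diagonal therefore give the corner equation at each end of that
  diagonal, which yields (E1), (E2) and (E12). S1 and S2 are equivalent because both are
  affine in \<open>Z\<close>, and the corner equation (E) at \<open>x (k + 1)\<close> says exactly that they have the
  same root.\<close>

lemma cross_eq_of_common_ratio:
  fixes U1 V1 U2 V2 \<alpha> \<beta> :: "'a::idom"
  assumes "U1 * \<alpha> = V1 * \<beta>" "U2 * \<alpha> = V2 * \<beta>" "\<alpha> \<noteq> 0 \<or> \<beta> \<noteq> 0"
  shows "U1 * V2 = V1 * U2"
proof -
  have "\<alpha> * (U1*V2 - V1*U2) = 0" "\<beta> * (U1*V2 - V1*U2) = 0" using assms(1,2) by algebra+
  with assms(3) show ?thesis by auto
qed

text \<open>Denominators cleared in \<open>r a A1 V * r a V A0 = r b B1 V * r b V B0\<close>, where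
  \<open>r c P Q = (c P - Q) / (P - c Q)\<close> is the exponential form of a sinh ratio.\<close>
definition corner_eq :: "'a::comm_ring \<Rightarrow> 'a \<Rightarrow> 'a \<Rightarrow> 'a \<Rightarrow> 'a \<Rightarrow> 'a \<Rightarrow> 'a \<Rightarrow> bool" where
  "corner_eq a b V A1 A0 B1 B0 \<longleftrightarrow>
     (a*A1 - V) * (a*V - A0) * (B1 - b*V) * (V - b*B0) = (b*B1 - V) * (b*V - B0) * (A1 - a*V) * (V - a*A0)"

text \<open>S1 reads \<open>superposition a b X T H Z = 0\<close> with \<open>X, T, H, Z\<close> the exponentials of twice
  \<open>x (k + 1)\<close>, \<open>xt k\<close>, \<open>xh k\<close>, \<open>xht k\<close>; S2 is the same with \<open>T, H\<close> taken at \<open>k + 1\<close>.\<close>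
definition superposition :: "'a::comm_ring_1 \<Rightarrow> 'a \<Rightarrow> 'a \<Rightarrow> 'a \<Rightarrow> 'a \<Rightarrow> 'a \<Rightarrow> 'a" where
  "superposition a b X T H Z =
     (a^2 - b^2) * (H*T + X*Z) + b * (1 - a^2) * (H*Z + X*T) + a * (b^2 - 1) * (T*Z + X*H)"

definition superposition_slope :: "'a::comm_ring_1 \<Rightarrow> 'a \<Rightarrow> 'a \<Rightarrow> 'a \<Rightarrow> 'a \<Rightarrow> 'a" where
  "superposition_slope a b X T H = (a^2 - b^2) * X + b * (1 - a^2) * H + a * (b^2 - 1) * T"

definition superposition_offset :: "'a::comm_ring_1 \<Rightarrow> 'a \<Rightarrow> 'a \<Rightarrow> 'a \<Rightarrow> 'a \<Rightarrow> 'a" where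
  "superposition_offset a b X T H = (a^2 - b^2) * H * T + b * (1 - a^2) * X * T + a * (b^2 - 1) * X * H"

lemma superposition_affine:
  "superposition a b X T H Z = Z * superposition_slope a b X T H + superposition_offset a b X T H"
  unfolding superposition_def superposition_slope_def superposition_offset_def
  by (simp add: algebra_simps power2_eq_square)

lemma superposition_swap:
  "superposition b a X H T Z = - superposition a b X T H Z"
  unfolding superposition_def by (simp add: algebra_simps power2_eq_square)

lemma superposition_opposite:
  "superposition a b H Z X T = superposition a b X T H Z"
  unfolding superposition_def by (simp add: algebra_simps power2_eq_square)

lemma superposition_three_leg:
  "(a*X - T) * (Z - b*T) * (b*H - a*T) - (X - a*T) * (b*Z - T) * (a*H - b*T)
     = - T * superposition a b X T H (Z::'a::comm_ring_1)"
  unfolding superposition_def by (simp add: algebra_simps power2_eq_square)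

lemma offset_slope_cross_of_corner_eq:
  fixes a b :: "'a::idom"
  assumes "corner_eq a b X T1 T H1 H" "X \<noteq> 0"
  shows "superposition_offset a b X T H * superposition_slope a b X T1 H1
       = superposition_offset a b X T1 H1 * superposition_slope a b X T H"
proof -
  have "(b^2 - a^2) * ((a*T1 - X) * (a*X - T) * (H1 - b*X) * (X - b*H)
                     - (b*H1 - X) * (b*X - H) * (T1 - a*X) * (X - a*T))
      = X * (superposition_offset a b X T H * superposition_slope a b X T1 H1
           - superposition_offset a b X T1 H1 * superposition_slope a b X T H)"
    unfolding superposition_offset_def superposition_slope_def by algebra
  with assms show ?thesis by (simp add: corner_eq_def)
qed

lemma superposition_eq_0_iff_of_corner_eq:
  fixes a b :: "'a::idom"
  assumes "corner_eq a b X T1 T H1 H" "X \<noteq> 0"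
    and D: "superposition_slope a b X T H \<noteq> 0" and D1: "superposition_slope a b X T1 H1 \<noteq> 0"
  shows "superposition a b X T H Z = 0 \<longleftrightarrow> superposition a b X T1 H1 Z = 0"
proof -
  let ?D = "superposition_slope a b X T H" and ?D1 = "superposition_slope a b X T1 H1"
  let ?N = "superposition_offset a b X T H" and ?N1 = "superposition_offset a b X T1 H1"
  have "Z * ?D + ?N = 0 \<longleftrightarrow> (Z * ?D + ?N) * ?D1 = 0" using D1 by simp
  also have "\<dots> \<longleftrightarrow> (Z * ?D1 + ?N1) * ?D = 0"
    using offset_slope_cross_of_corner_eq[OF assms(1,2)] by (simp add: algebra_simps)
  also have "\<dots> \<longleftrightarrow> Z * ?D1 + ?N1 = 0" using D by simp
  finally show ?thesis by (simp only: superposition_affine)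
qed

lemma diagonal_nondeg_of_slope:
  fixes a b :: "'a::idom"
  assumes "superposition_slope a b X T H \<noteq> 0" "H \<noteq> 0"
  shows "b*H \<noteq> a*T \<or> a*H \<noteq> b*T"
proof (rule ccontr)
  assume "\<not> ?thesis"
  then have "H * superposition_slope a b X T H = 0"
    unfolding superposition_slope_def by algebra
  with assms show False by simp
qed

lemma corner_eq_at_T_of_superpositions:
  fixes a b :: "'a::idom"
  assumes "superposition a b X1 T H Z1 = 0" "superposition a b X0 T H Z0 = 0"
    and "b*H \<noteq> a*T \<or> a*H \<noteq> b*T"
  shows "corner_eq a b T X1 X0 Z1 Z0"
proof -
  have leg: "(a*X - T) * (Z - b*T) * (b*H - a*T) = (X - a*T) * (b*Z - T) * (a*H - b*T)"
    if "superposition a b X T H Z = 0" for X Z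
    using superposition_three_leg[of a X T Z b H] that by simp
  have "((a*X1 - T) * (Z1 - b*T)) * ((X0 - a*T) * (b*Z0 - T))
      = ((X1 - a*T) * (b*Z1 - T)) * ((a*X0 - T) * (Z0 - b*T))"
    by (rule cross_eq_of_common_ratio[OF leg[OF assms(1)] leg[OF assms(2)]])
      (use assms(3) in auto)
  then show ?thesis unfolding corner_eq_def by algebra
qed

lemma corner_eq_at_H_of_superpositions:
  fixes a b :: "'a::idom"
  assumes "superposition a b X1 T H Z1 = 0" "superposition a b X0 T H Z0 = 0"
    and "b*H \<noteq> a*T \<or> a*H \<noteq> b*T"
  shows "corner_eq b a H X1 X0 Z1 Z0"
  using corner_eq_at_T_of_superpositions[of b a X1 H T Z1 X0 Z0] assms
  by (auto simp: superposition_swap[of b a])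

lemma corner_eq_at_Z_of_superpositions:
  fixes a b :: "'a::idom"
  assumes "superposition a b X T H Z = 0" "superposition a b X T1 H1 Z = 0"
    and X: "corner_eq a b X T1 T H1 H" and "Z \<noteq> 0" "b \<noteq> 0"
  shows "corner_eq a b Z H1 H T1 T"
proof (cases "b*X \<noteq> a*Z \<or> a*X \<noteq> b*Z")
  case True
  then show ?thesis
    using corner_eq_at_T_of_superpositions[of a b H1 Z X T1 H T] assms(1,2)
    by (simp add: superposition_opposite)
next
  case False
  \<comment> \<open>A degenerate diagonal forces \<open>a = \<plusminus>b\<close> and \<open>X = \<plusminus>Z\<close>; the corner at \<open>Z\<close> is then the one at \<open>X\<close>.\<close>
  then have "Z * ((a - b) * (a + b)) = 0" by algebra
  with \<open>Z \<noteq> 0\<close> have "a = b \<or> a = - b" by (auto simp: add_eq_0_iff2)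
  then show ?thesis
  proof
    assume ab: "a = b"
    with False \<open>b \<noteq> 0\<close> have "X = Z" by auto
    with X show ?thesis unfolding ab corner_eq_def by algebra
  next
    assume ab: "a = - b"
    with False have "(X + Z) * b = 0" by algebra
    with \<open>b \<noteq> 0\<close> have "X = - Z" by (simp add: add_eq_0_iff)
    with X show ?thesis unfolding ab corner_eq_def by algebra
  qed
qed

lemma superposition_consistency:
  fixes a b :: "'a::idom" and X T H Z :: "int \<Rightarrow> 'a"
  assumes "b \<noteq> 0" and nz: "\<And>k. X k \<noteq> 0" "\<And>k. H k \<noteq> 0" "\<And>k. Z k \<noteq> 0"
    and corner: "\<And>k. corner_eq a b (X k) (T k) (T (k - 1)) (H k) (H (k - 1))"
    and slope: "\<And>k. superposition_slope a b (X (k + 1)) (T k) (H k) \<noteq> 0"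
      "\<And>k. superposition_slope a b (X (k + 1)) (T (k + 1)) (H (k + 1)) \<noteq> 0"
  shows "(\<forall>k. superposition a b (X (k + 1)) (T k) (H k) (Z k) = 0
            \<longleftrightarrow> superposition a b (X (k + 1)) (T (k + 1)) (H (k + 1)) (Z k) = 0)
    \<and> ((\<forall>k. superposition a b (X (k + 1)) (T k) (H k) (Z k) = 0) \<longrightarrow> (\<forall>k.
          corner_eq a b (T k) (X (k + 1)) (X k) (Z k) (Z (k - 1))
        \<and> corner_eq b a (H k) (X (k + 1)) (X k) (Z k) (Z (k - 1))
        \<and> corner_eq a b (Z k) (H (k + 1)) (H k) (T (k + 1)) (T k)))"
proof -
  have corner_next: "corner_eq a b (X (k + 1)) (T (k + 1)) (T k) (H (k + 1)) (H k)" for k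
    using corner[of "k + 1"] by simp
  have shift: "superposition a b (X (k + 1)) (T k) (H k) (Z k) = 0
      \<longleftrightarrow> superposition a b (X (k + 1)) (T (k + 1)) (H (k + 1)) (Z k) = 0" for k
    by (rule superposition_eq_0_iff_of_corner_eq[OF corner_next nz(1) slope])
  moreover have
      "corner_eq a b (T k) (X (k + 1)) (X k) (Z k) (Z (k - 1))
     \<and> corner_eq b a (H k) (X (k + 1)) (X k) (Z k) (Z (k - 1))
     \<and> corner_eq a b (Z k) (H (k + 1)) (H k) (T (k + 1)) (T k)"
    if S: "\<forall>k. superposition a b (X (k + 1)) (T k) (H k) (Z k) = 0" for k
  proof -
    have quad: "superposition a b (X (k + 1)) (T k) (H k) (Z k) = 0" using S by blast
    have quad_next: "superposition a b (X (k + 1)) (T (k + 1)) (H (k + 1)) (Z k) = 0"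
      using S shift by blast
    have quad_prev: "superposition a b (X k) (T k) (H k) (Z (k - 1)) = 0"
      using S[rule_format, of "k - 1"] shift[of "k - 1"] by simp
    have diag: "b * H k \<noteq> a * T k \<or> a * H k \<noteq> b * T k"
      by (rule diagonal_nondeg_of_slope[OF slope(1) nz(2)])
    show ?thesis
      using corner_eq_at_T_of_superpositions[OF quad quad_prev diag]
        corner_eq_at_H_of_superpositions[OF quad quad_prev diag]
        corner_eq_at_Z_of_superpositions[OF quad quad_next corner_next nz(3) \<open>b \<noteq> 0\<close>]
      by blast
  qed
  ultimately show ?thesis by blast
qed

lemma sinh_diff_add_exp:
  fixes p q l :: complex
  shows "sinh (p - q + l) = (exp (2*l) * exp (2*p) - exp (2*q)) / (2 * exp (p + q + l))"
proof -
  have "exp (p - q + l) * exp (p + q + l) = exp (2*l) * exp (2*p)"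
    "exp (- (p - q + l)) * exp (p + q + l) = exp (2*q)"
    by (simp_all flip: exp_add add: algebra_simps)
  then show ?thesis
    by (simp add: sinh_def scaleR_conv_of_real field_simps flip: exp_add)
qed

lemma sinh_diff_diff_exp:
  fixes p q l :: complex
  shows "sinh (p - q - l) = (exp (2*p) - exp (2*l) * exp (2*q)) / (2 * exp (p + q + l))"
proof -
  have "sinh (p - q - l) = - sinh (q - p + l)"
    by (simp flip: sinh_minus add: algebra_simps)
  also have "\<dots> = - ((exp (2*l) * exp (2*q) - exp (2*p)) / (2 * exp (q + p + l)))"
    by (simp only: sinh_diff_add_exp)
  finally show ?thesis
    by (simp only: add.commute[of q p] minus_divide_left minus_diff_eq)
qed

lemma sinh_ratio_exp:
  fixes p q l :: complex
  shows "sinh (p - q + l) / sinh (p - q - l)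
       = (exp (2*l) * exp (2*p) - exp (2*q)) / (exp (2*p) - exp (2*l) * exp (2*q))"
  by (simp add: sinh_diff_add_exp sinh_diff_diff_exp)

lemma nondeg_exp_iff:
  "nondeg l (p - q) \<longleftrightarrow> exp (2*l) * exp (2*p) \<noteq> exp (2*q) \<and> exp (2*p) \<noteq> exp (2*l) * exp (2*q)"
  by (simp add: nondeg_def sinh_diff_add_exp sinh_diff_diff_exp)

lemma sinh_corner_iff_corner_eq:
  fixes l m v p1 p0 q1 q0 :: complex
  assumes "nondeg l (p1 - v)" "nondeg l (v - p0)" "nondeg m (q1 - v)" "nondeg m (v - q0)"
  shows "sinh (p1 - v + l) / sinh (p1 - v - l) * (sinh (v - p0 + l) / sinh (v - p0 - l))
       = sinh (q1 - v + m) / sinh (q1 - v - m) * (sinh (v - q0 + m) / sinh (v - q0 - m))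
    \<longleftrightarrow> corner_eq (exp (2*l)) (exp (2*m)) (exp (2*v)) (exp (2*p1)) (exp (2*p0)) (exp (2*q1)) (exp (2*q0))"
  unfolding sinh_ratio_exp using assms
  by (simp add: nondeg_exp_iff corner_eq_def frac_eq_eq ac_simps)

theorem theorem16:
  fixes N :: nat and lam mu :: complex
    and x xt xh xht :: "int \<Rightarrow> complex"
  assumes N: "N \<ge> 1"
    and per: "\<And>k. x (k + int N) = x k" "\<And>k. xt (k + int N) = xt k"
             "\<And>k. xh (k + int N) = xh k" "\<And>k. xht (k + int N) = xht k"
    and E: "\<And>k. sinh (xt k - x k + lam) / sinh (xt k - x k - lam)
                  * (sinh (x k - xt (k - 1) + lam) / sinh (x k - xt (k - 1) - lam))
               = sinh (xh k - x k + mu) / sinh (xh k - x k - mu)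
                  * (sinh (x k - xh (k - 1) + mu) / sinh (x k - xh (k - 1) - mu))"
    and nd: "\<And>k. nondeg lam (xt k - x k) \<and> nondeg lam (x k - xt (k - 1))
              \<and> nondeg mu (xh k - x k) \<and> nondeg mu (x k - xh (k - 1))
              \<and> nondeg lam (x (k + 1) - xt k) \<and> nondeg mu (x (k + 1) - xh k)
              \<and> nondeg mu (xht k - xt k) \<and> nondeg mu (xt k - xht (k - 1))
              \<and> nondeg lam (xht k - xh k) \<and> nondeg lam (xh k - xht (k - 1))
              \<and> nondeg lam (xh (k + 1) - xht k) \<and> nondeg mu (xt (k + 1) - xht k)"
    and def1: "\<And>k. (exp (4*lam) - exp (4*mu)) * exp (2 * x (k + 1))
                   + exp (2*mu) * (1 - exp (4*lam)) * exp (2 * xh k)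
                   + exp (2*lam) * (exp (4*mu) - 1) * exp (2 * xt k) \<noteq> 0"
    and def2: "\<And>k. (exp (4*lam) - exp (4*mu)) * exp (2 * x (k + 1))
                   + exp (2*mu) * (1 - exp (4*lam)) * exp (2 * xh (k + 1))
                   + exp (2*lam) * (exp (4*mu) - 1) * exp (2 * xt (k + 1)) \<noteq> 0"
  defines "S1 \<equiv> \<lambda>k.
      (exp (4*lam) - exp (4*mu)) * (exp (2 * xh k) * exp (2 * xt k) + exp (2 * x (k + 1)) * exp (2 * xht k))
    + exp (2*mu) * (1 - exp (4*lam)) * (exp (2 * xh k) * exp (2 * xht k) + exp (2 * x (k + 1)) * exp (2 * xt k))
    + exp (2*lam) * (exp (4*mu) - 1) * (exp (2 * xt k) * exp (2 * xht k) + exp (2 * x (k + 1)) * exp (2 * xh k)) = 0"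
    and "S2 \<equiv> \<lambda>k.
      (exp (4*lam) - exp (4*mu)) * (exp (2 * xh (k + 1)) * exp (2 * xt (k + 1)) + exp (2 * x (k + 1)) * exp (2 * xht k))
    + exp (2*mu) * (1 - exp (4*lam)) * (exp (2 * xh (k + 1)) * exp (2 * xht k) + exp (2 * x (k + 1)) * exp (2 * xt (k + 1)))
    + exp (2*lam) * (exp (4*mu) - 1) * (exp (2 * xt (k + 1)) * exp (2 * xht k) + exp (2 * x (k + 1)) * exp (2 * xh (k + 1))) = 0"
  shows "(\<forall>k. S1 k \<longleftrightarrow> S2 k)
    \<and> ((\<forall>k. S1 k) \<longrightarrow> (\<forall>k.
         sinh (xt k - x k + lam) / sinh (xt k - x k - lam)
           * (sinh (x (k + 1) - xt k + lam) / sinh (x (k + 1) - xt k - lam))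
         = sinh (xht k - xt k + mu) / sinh (xht k - xt k - mu)
           * (sinh (xt k - xht (k - 1) + mu) / sinh (xt k - xht (k - 1) - mu))
       \<and> sinh (xh k - x k + mu) / sinh (xh k - x k - mu)
           * (sinh (x (k + 1) - xh k + mu) / sinh (x (k + 1) - xh k - mu))
         = sinh (xht k - xh k + lam) / sinh (xht k - xh k - lam)
           * (sinh (xh k - xht (k - 1) + lam) / sinh (xh k - xht (k - 1) - lam))
       \<and> sinh (xht k - xh k + lam) / sinh (xht k - xh k - lam)
           * (sinh (xh (k + 1) - xht k + lam) / sinh (xh (k + 1) - xht k - lam))
         = sinh (xht k - xt k + mu) / sinh (xht k - xt k - mu)
           * (sinh (xt (k + 1) - xht k + mu) / sinh (xt (k + 1) - xht k - mu))))"
proof -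
  let ?a = "exp (2*lam)" and ?b = "exp (2*mu)"
  let ?X = "\<lambda>k. exp (2 * x k)" and ?T = "\<lambda>k. exp (2 * xt k)"
    and ?H = "\<lambda>k. exp (2 * xh k)" and ?Z = "\<lambda>k. exp (2 * xht k)"
  have exp4: "exp (4*z) = exp (2*z)^2" for z :: complex
    by (simp add: power2_eq_square flip: exp_add)
  have S1: "S1 k \<longleftrightarrow> superposition ?a ?b (?X (k + 1)) (?T k) (?H k) (?Z k) = 0" for k
    unfolding S1_def superposition_def exp4 ..
  have S2: "S2 k \<longleftrightarrow> superposition ?a ?b (?X (k + 1)) (?T (k + 1)) (?H (k + 1)) (?Z k) = 0" for k
    unfolding S2_def superposition_def exp4 ..
  have corner: "corner_eq ?a ?b (?X k) (?T k) (?T (k - 1)) (?H k) (?H (k - 1))" for k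
    using sinh_corner_iff_corner_eq[of lam "xt k" "x k" "xt (k - 1)" mu "xh k" "xh (k - 1)"] E nd
    by blast
  have slope: "superposition_slope ?a ?b (?X (k + 1)) (?T k) (?H k) \<noteq> 0"
    "superposition_slope ?a ?b (?X (k + 1)) (?T (k + 1)) (?H (k + 1)) \<noteq> 0" for k
    using def1[of k] def2[of k] unfolding superposition_slope_def exp4 .
  note consistency = superposition_consistency[where a = ?a and b = ?b and X = ?X and T = ?T
      and H = ?H and Z = ?Z, OF _ _ _ _ corner slope, simplified]
  show ?thesis
    unfolding S1 S2 using consistency nd
      sinh_corner_iff_corner_eq[of lam "x (k + 1)" "xt k" "x k" mu "xht k" "xht (k - 1)" for k]
      sinh_corner_iff_corner_eq[of mu "x (k + 1)" "xh k" "x k" lam "xht k" "xht (k - 1)" for k]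
      sinh_corner_iff_corner_eq[of lam "xh (k + 1)" "xht k" "xh k" mu "xt (k + 1)" "xt k" for k]
    by (simp add: mult.commute)
qed

end
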